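(* Consider the stochastic rested bandit model in the context, fix an arm $i$, a time budget $T$, a window function $h:\mathbb{N}\to\mathbb{N}$ with $h(n)\le\lfloor n/2\rfloor$ for all $n$, and $a>0$. For $n$ with $h(n)\ge1$ define $$\check\mu_i^T(n)=\frac{1}{h(n)}\sum_{l=n-h(n)+1}^{n}\Big(X_i(l)+(T-l)\frac{X_i(l)-X_i(l-h(n))}{h(n)}\Big),\quad \widetilde\mu_i^T(n)=\frac{1}{h(n)}\sum_{l=n-h(n)+1}^{n}\Big(\mu_i(l)+(T-l)\frac{\mu_i(l)-\mu_i(l-h(n))}{h(n)}\Big),$$ $$\check\beta_i^T(n)=\sigma\,(T-n+h(n)-1)\sqrt{\frac{a}{h(n)^3}}.$$ Then, for any arm-selection strategy, $$\Pr\Big(\exists t\in\{1,\dots,T\}:\ h(N_{i,t-1})\ge1\ \text{and}\ \big|\check\mu_i^T(N_{i,t-1})-\widetilde\mu_i^T(N_{i,t-1})\big|>\check\beta_i^T(N_{i,t-1})\Big)\le 2T\exp\Big(-\frac{a}{10}\Big).$$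
   Context: Model: $K$ arms, time budget $T$. At each round $t\in\{1,\dots,T\}$ an arm $I_t$ is chosen (based on the past) and the reward $x_t=\mu_{I_t}(N_{I_t,t})+\eta_t$ is observed, where $N_{i,t}=\sum_{\tau=1}^t\mathbb{1}\{I_\tau=i\}$ (with $N_{i,0}=0$), $\mu_i(n)$ is the expected reward of arm $i$ at its $n$-th pull, and $\eta_t$ is zero-mean and $\sigma^2$-subgaussian conditionally on the past ($\mathbb{E}[e^{\xi\eta_t}\mid\text{past}]\le e^{\sigma^2\xi^2/2}$ for all $\xi$). $X_i(l)$ denotes the reward observed at the $l$-th pull of arm $i$. (When $h(n)=0$ the paper sets these quantities to $+\infty$ and such rounds are excluded from the event.) *)

theory Defs
  imports "HOL-Probability.Probability"
begin

definition pulls :: "(nat \<Rightarrow> 'w \<Rightarrow> nat) \<Rightarrow> nat \<Rightarrow> nat \<Rightarrow> 'w \<Rightarrow> nat" where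
  "pulls I i t \<omega> = card {\<tau> \<in> {1..t}. I \<tau> \<omega> = i}"

definition reward :: "(nat \<Rightarrow> nat \<Rightarrow> real) \<Rightarrow> (nat \<Rightarrow> 'w \<Rightarrow> nat) \<Rightarrow> (nat \<Rightarrow> 'w \<Rightarrow> real)
    \<Rightarrow> nat \<Rightarrow> 'w \<Rightarrow> real" where
  "reward mu I eta t \<omega> = mu (I t \<omega>) (pulls I (I t \<omega>) t \<omega>) + eta t \<omega>"

definition pull_time :: "(nat \<Rightarrow> 'w \<Rightarrow> nat) \<Rightarrow> nat \<Rightarrow> nat \<Rightarrow> 'w \<Rightarrow> nat" where
  "pull_time I i l \<omega> = (LEAST \<tau>. 1 \<le> \<tau> \<and> I \<tau> \<omega> = i \<and> pulls I i \<tau> \<omega> = l)"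

definition Xobs :: "(nat \<Rightarrow> nat \<Rightarrow> real) \<Rightarrow> (nat \<Rightarrow> 'w \<Rightarrow> nat) \<Rightarrow> (nat \<Rightarrow> 'w \<Rightarrow> real)
    \<Rightarrow> nat \<Rightarrow> nat \<Rightarrow> 'w \<Rightarrow> real" where
  "Xobs mu I eta i l \<omega> = reward mu I eta (pull_time I i l \<omega>) \<omega>"

definition window_est :: "nat \<Rightarrow> (nat \<Rightarrow> nat) \<Rightarrow> (nat \<Rightarrow> real) \<Rightarrow> nat \<Rightarrow> real" where
  "window_est T h Y n =
     (1 / real (h n)) * (\<Sum>l \<in> {n - h n + 1..n}.
        Y l + (real T - real l) * (Y l - Y (l - h n)) / real (h n))"

definition check_mu :: "(nat \<Rightarrow> nat \<Rightarrow> real) \<Rightarrow> (nat \<Rightarrow> 'w \<Rightarrow> nat) \<Rightarrow> (nat \<Rightarrow> 'w \<Rightarrow> real)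
    \<Rightarrow> nat \<Rightarrow> nat \<Rightarrow> (nat \<Rightarrow> nat) \<Rightarrow> nat \<Rightarrow> 'w \<Rightarrow> real" where
  "check_mu mu I eta i T h n \<omega> = window_est T h (\<lambda>l. Xobs mu I eta i l \<omega>) n"

definition tilde_mu :: "(nat \<Rightarrow> nat \<Rightarrow> real) \<Rightarrow> nat \<Rightarrow> nat \<Rightarrow> (nat \<Rightarrow> nat) \<Rightarrow> nat \<Rightarrow> real" where
  "tilde_mu mu i T h n = window_est T h (mu i) n"

definition check_beta :: "real \<Rightarrow> real \<Rightarrow> nat \<Rightarrow> (nat \<Rightarrow> nat) \<Rightarrow> nat \<Rightarrow> real" where
  "check_beta \<sigma> a T h n =
     \<sigma> * (real T - real n + real (h n) - 1) * sqrt (a / real (h n) ^ 3)"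

end

theory Submission
  imports Defs
begin

text \<open>
  For fixed n, both estimators are the same linear combination of the first n observations of
  arm i, so their difference is the noise combination \<open>\<Sum>\<^sub>k c\<^sub>k \<eta>(\<tau>\<^sub>k)\<close>, where
  \<open>\<tau>\<^sub>k\<close> is the round of the k-th pull and the deterministic weights satisfy
  \<open>\<Sum>\<^sub>k c\<^sub>k\<^sup>2 \<le> 5 (T - n + h(n) - 1)\<^sup>2 / h(n)\<^sup>3\<close>. Indexed by rounds, this is \<open>\<Sum>\<^sub>\<tau> w(\<tau>) \<eta>(\<tau>)\<close>
  with the predictable weight \<open>w(\<tau>) = c(N(i,\<tau>))\<close> if arm i is pulled at round \<open>\<tau>\<close> and 0 otherwise.
  As these weights vanish after the n-th pull, the random \<open>n = N(i,t-1)\<close> may be replaced by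
  each fixed \<open>n < T\<close>, with the sum running up to round T - 1. Conditional subgaussianity makes
  \<open>exp (\<Sum>\<^sub>\<tau> \<lambda> w(\<tau>) \<eta>(\<tau>) - \<sigma>\<^sup>2 \<lambda>\<^sup>2 w(\<tau>)\<^sup>2 / 2)\<close> a nonnegative supermartingale, so Chernoff's
  bound gives \<open>exp (-a/10)\<close> for each sign and each n, and a union bound finishes the proof.
\<close>

lemma pulls_0 [simp]: "pulls I i 0 \<omega> = 0"
  by (simp add: pulls_def)

lemma pulls_Suc: "pulls I i (Suc t) \<omega> = pulls I i t \<omega> + (if I (Suc t) \<omega> = i then 1 else 0)"
proof -
  have "{\<tau> \<in> {1..Suc t}. I \<tau> \<omega> = i}
      = {\<tau> \<in> {1..t}. I \<tau> \<omega> = i} \<union> (if I (Suc t) \<omega> = i then {Suc t} else {})"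
    by (auto simp: le_Suc_eq)
  then show ?thesis unfolding pulls_def by (auto simp: card_insert_if)
qed

lemma pulls_mono: "s \<le> t \<Longrightarrow> pulls I i s \<omega> \<le> pulls I i t \<omega>"
  unfolding pulls_def by (rule card_mono) auto

lemma pulls_le: "pulls I i t \<omega> \<le> t"
  unfolding pulls_def by (rule order.trans[OF card_mono[of "{1..t}"]]) auto

lemma pulls_less:
  assumes "s < t" "I t \<omega> = i"
  shows "pulls I i s \<omega> < pulls I i t \<omega>"
proof -
  obtain u where t: "t = Suc u" using assms(1) by (cases t) auto
  have "pulls I i s \<omega> \<le> pulls I i u \<omega>" using assms t by (intro pulls_mono) auto
  then show ?thesis using assms t pulls_Suc[of I i u \<omega>] by simp
qed

lemma pull_time_pulls:
  assumes "1 \<le> \<tau>" "I \<tau> \<omega> = i"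
  shows "pull_time I i (pulls I i \<tau> \<omega>) \<omega> = \<tau>"
  unfolding pull_time_def
proof (rule Least_equality)
  fix \<tau>' assume "1 \<le> \<tau>' \<and> I \<tau>' \<omega> = i \<and> pulls I i \<tau>' \<omega> = pulls I i \<tau> \<omega>"
  then show "\<tau> \<le> \<tau>'" using pulls_less[of \<tau>' \<tau> I \<omega> i] assms by (cases "\<tau> \<le> \<tau>'") auto
qed (use assms in simp)

lemma inj_on_pulls: "inj_on (\<lambda>\<tau>. pulls I i \<tau> \<omega>) {\<tau> \<in> {1..t}. I \<tau> \<omega> = i}"
proof (rule inj_onI)
  fix x y
  assume "x \<in> {\<tau> \<in> {1..t}. I \<tau> \<omega> = i}" "y \<in> {\<tau> \<in> {1..t}. I \<tau> \<omega> = i}"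
    and "pulls I i x \<omega> = pulls I i y \<omega>"
  then show "x = y"
    using pulls_less[of x y I \<omega> i] pulls_less[of y x I \<omega> i] by (cases x y rule: linorder_cases) auto
qed

lemma pulls_image: "(\<lambda>\<tau>. pulls I i \<tau> \<omega>) ` {\<tau> \<in> {1..t}. I \<tau> \<omega> = i} = {1..pulls I i t \<omega>}"
proof (rule card_subset_eq)
  show "(\<lambda>\<tau>. pulls I i \<tau> \<omega>) ` {\<tau> \<in> {1..t}. I \<tau> \<omega> = i} \<subseteq> {1..pulls I i t \<omega>}"
  proof (rule image_subsetI)
    fix \<tau> assume "\<tau> \<in> {\<tau> \<in> {1..t}. I \<tau> \<omega> = i}"
    then show "pulls I i \<tau> \<omega> \<in> {1..pulls I i t \<omega>}"
      using pulls_less[of 0 \<tau> I \<omega> i] pulls_mono[of \<tau> t I i \<omega>] by simp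
  qed
  have "card ((\<lambda>\<tau>. pulls I i \<tau> \<omega>) ` {\<tau> \<in> {1..t}. I \<tau> \<omega> = i}) = card {\<tau> \<in> {1..t}. I \<tau> \<omega> = i}"
    by (rule card_image[OF inj_on_pulls])
  also have "\<dots> = pulls I i t \<omega>"
    by (simp only: pulls_def)
  finally show "card ((\<lambda>\<tau>. pulls I i \<tau> \<omega>) ` {\<tau> \<in> {1..t}. I \<tau> \<omega> = i}) = card {1..pulls I i t \<omega>}"
    by simp
qed simp

lemma Xobs_eq_mean_plus_noise:
  assumes "1 \<le> k" "k \<le> pulls I i t \<omega>"
  shows "Xobs mu I eta i k \<omega> = mu i k + eta (pull_time I i k \<omega>) \<omega>"
proof -
  have "k \<in> (\<lambda>\<tau>. pulls I i \<tau> \<omega>) ` {\<tau> \<in> {1..t}. I \<tau> \<omega> = i}"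
    using assms by (simp only: pulls_image) simp
  then obtain \<tau> where "1 \<le> \<tau>" "I \<tau> \<omega> = i" "k = pulls I i \<tau> \<omega>"
    by auto
  then show ?thesis by (simp add: Xobs_def reward_def pull_time_pulls)
qed

lemma sum_pulled_rounds:
  "(\<Sum>\<tau>\<in>{1..t}. if I \<tau> \<omega> = i then f (pulls I i \<tau> \<omega>) \<tau> else 0)
   = (\<Sum>k\<in>{1..pulls I i t \<omega>}. f k (pull_time I i k \<omega>))"
proof -
  have "(\<Sum>\<tau>\<in>{1..t}. if I \<tau> \<omega> = i then f (pulls I i \<tau> \<omega>) \<tau> else 0)
      = (\<Sum>\<tau>\<in>{\<tau> \<in> {1..t}. I \<tau> \<omega> = i}. f (pulls I i \<tau> \<omega>) \<tau>)"
    by (rule sum.inter_filter[symmetric]) simp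
  also have "\<dots> = (\<Sum>k\<in>(\<lambda>\<tau>. pulls I i \<tau> \<omega>) ` {\<tau> \<in> {1..t}. I \<tau> \<omega> = i}. f k (pull_time I i k \<omega>))"
    by (rule sum.reindex_cong[OF inj_on_pulls refl, symmetric]) (auto simp: pull_time_pulls)
  finally show ?thesis by (simp only: pulls_image)
qed

definition pull_weight :: "(nat \<Rightarrow> 'w \<Rightarrow> nat) \<Rightarrow> nat \<Rightarrow> (nat \<Rightarrow> real) \<Rightarrow> nat \<Rightarrow> 'w \<Rightarrow> real" where
  "pull_weight I i c \<tau> \<omega> = (if I \<tau> \<omega> = i then c (pulls I i \<tau> \<omega>) else 0)"

lemma sum_pull_weight_mult:
  "(\<Sum>\<tau>\<in>{1..t}. pull_weight I i c \<tau> \<omega> * f \<tau>) = (\<Sum>k\<in>{1..pulls I i t \<omega>}. c k * f (pull_time I i k \<omega>))"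
  by (rule trans[OF sum.cong sum_pulled_rounds[where f = "\<lambda>k \<tau>. c k * f \<tau>"]])
    (auto simp: pull_weight_def)

lemma sum_pull_weight_sq:
  "(\<Sum>\<tau>\<in>{1..t}. (pull_weight I i c \<tau> \<omega>)\<^sup>2) = (\<Sum>k\<in>{1..pulls I i t \<omega>}. (c k)\<^sup>2)"
  by (rule trans[OF sum.cong sum_pulled_rounds[where f = "\<lambda>k \<tau>. (c k)\<^sup>2"]])
    (auto simp: pull_weight_def)

lemma finite_range_pull_weight: "finite (pull_weight I i c \<tau> ` S)"
proof (rule finite_subset)
  show "pull_weight I i c \<tau> ` S \<subseteq> insert 0 (c ` {..\<tau>})"
    using pulls_le[of I i \<tau>] by (auto simp: pull_weight_def)
qed simp

text \<open>
  Expanding \<^const>\<open>window_est\<close>, the observation at pull l of the upper window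
  \<open>{n - h(n) + 1..n}\<close> gets weight \<open>(h(n) + T - l) / h(n)\<^sup>2\<close> and the one at pull \<open>l - h(n)\<close> of
  the lower window gets weight \<open>-(T - l) / h(n)\<^sup>2\<close>.
\<close>
definition window_weight :: "nat \<Rightarrow> (nat \<Rightarrow> nat) \<Rightarrow> nat \<Rightarrow> nat \<Rightarrow> real" where
  "window_weight T h n k =
     (if k \<in> {n - h n + 1..n} then (real (h n) + real T - real k) / real (h n) ^ 2
      else if k \<in> {n + 1 - 2 * h n..n - h n} then (real (k + h n) - real T) / real (h n) ^ 2
      else 0)"

lemma window_weight_eq_0: "n < k \<Longrightarrow> window_weight T h n k = 0"
  by (auto simp: window_weight_def)

lemma sum_two_windows:
  fixes f g :: "nat \<Rightarrow> 'a::comm_monoid_add"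
  assumes "1 \<le> m" "2 * m \<le> n"
  shows "(\<Sum>k\<in>{1..n}. if k \<in> {n - m + 1..n} then f k else if k \<in> {n + 1 - 2 * m..n - m} then g k else 0)
     = sum f {n - m + 1..n} + sum g {n + 1 - 2 * m..n - m}"
proof -
  let ?up = "{n - m + 1..n}" and ?lo = "{n + 1 - 2 * m..n - m}"
  let ?F = "\<lambda>k. if k \<in> ?up then f k else if k \<in> ?lo then g k else 0"
  have "(\<Sum>k\<in>{1..n}. ?F k) = (\<Sum>k\<in>?up \<union> ?lo. ?F k)"
    by (rule sum.mono_neutral_right) (use assms in auto)
  also have "\<dots> = (\<Sum>k\<in>?up. ?F k) + (\<Sum>k\<in>?lo. ?F k)"
    by (rule sum.union_disjoint) (use assms in auto)
  also have "\<dots> = sum f ?up + sum g ?lo"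
    by (intro arg_cong2[where f = "(+)"] sum.cong) (use assms in auto)
  finally show ?thesis .
qed

lemma window_est_eq_sum_window_weight:
  assumes "1 \<le> h n" "2 * h n \<le> n"
  shows "window_est T h Y n = (\<Sum>k\<in>{1..n}. window_weight T h n k * Y k)"
proof -
  let ?up = "{n - h n + 1..n}" and ?lo = "{n + 1 - 2 * h n..n - h n}"
  define m where "m = real (h n)"
  have m: "m > 0" using assms by (simp add: m_def)
  have "window_est T h Y n = (\<Sum>l\<in>?up. (m + real T - real l) / m\<^sup>2 * Y l)
        + (\<Sum>l\<in>?up. (real l - real T) / m\<^sup>2 * Y (l - h n))"
    unfolding window_est_def m_def[symmetric] sum_distrib_left sum.distrib[symmetric]
    by (rule sum.cong) (use m in \<open>auto simp: field_simps power2_eq_square\<close>)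
  also have "(\<Sum>l\<in>?up. (real l - real T) / m\<^sup>2 * Y (l - h n))
      = (\<Sum>k\<in>?lo. (real (k + h n) - real T) / m\<^sup>2 * Y k)"
  proof (rule sum.reindex_cong[of "\<lambda>k. k + h n"])
    show "?up = (\<lambda>k. k + h n) ` ?lo"
      unfolding image_add_atLeastAtMost using assms by auto
  qed (auto simp: inj_on_def)
  also have "(\<Sum>l\<in>?up. (m + real T - real l) / m\<^sup>2 * Y l) + (\<Sum>k\<in>?lo. (real (k + h n) - real T) / m\<^sup>2 * Y k)
     = (\<Sum>k\<in>{1..n}. window_weight T h n k * Y k)"
    unfolding window_weight_def m_def if_distrib[of "\<lambda>x. x * Y _"] mult_zero_left
    by (rule sum_two_windows[OF assms, symmetric])
  finally show ?thesis .
qed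

lemma window_weight_sq_le:
  assumes "1 \<le> h n" "2 * h n \<le> n" "n < T"
  defines "D \<equiv> real T - real n + real (h n) - 1"
  shows "(window_weight T h n k)\<^sup>2 \<le>
    (if k \<in> {n - h n + 1..n} then (2 * D)\<^sup>2 / real (h n) ^ 4
     else if k \<in> {n + 1 - 2 * h n..n - h n} then D\<^sup>2 / real (h n) ^ 4 else 0)"
proof -
  have sq_div: "(x / real (h n) ^ 2)\<^sup>2 \<le> y\<^sup>2 / real (h n) ^ 4" if "\<bar>x\<bar> \<le> y" for x y
    using power_mono[OF that abs_ge_zero, of 2] by (simp add: power_divide divide_right_mono flip: power_mult)
  consider (up) "k \<in> {n - h n + 1..n}" | (lo) "k \<notin> {n - h n + 1..n}" "k \<in> {n + 1 - 2 * h n..n - h n}"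
    | (out) "k \<notin> {n - h n + 1..n}" "k \<notin> {n + 1 - 2 * h n..n - h n}"
    by blast
  then show ?thesis
  proof cases
    case up
    then have "\<bar>real (h n) + real T - real k\<bar> \<le> 2 * D"
      using assms by (auto simp: D_def)
    from sq_div[OF this] show ?thesis using up by (simp add: window_weight_def)
  next
    case lo
    then have "\<bar>real (k + h n) - real T\<bar> \<le> D"
      using assms by (auto simp: D_def)
    from sq_div[OF this] show ?thesis using lo by (simp add: window_weight_def)
  next
    case out
    then show ?thesis by (simp only: window_weight_def if_False) simp
  qed
qed

lemma sum_window_weight_sq_le:
  assumes "1 \<le> h n" "2 * h n \<le> n" "n < T"
  shows "(\<Sum>k\<in>{1..n}. (window_weight T h n k)\<^sup>2)
    \<le> 5 * (real T - real n + real (h n) - 1)\<^sup>2 / real (h n) ^ 3"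
proof -
  define D where "D = real T - real n + real (h n) - 1"
  have "(\<Sum>k\<in>{1..n}. (window_weight T h n k)\<^sup>2)
      \<le> (\<Sum>k\<in>{1..n}. if k \<in> {n - h n + 1..n} then (2 * D)\<^sup>2 / real (h n) ^ 4
           else if k \<in> {n + 1 - 2 * h n..n - h n} then D\<^sup>2 / real (h n) ^ 4 else 0)"
    unfolding D_def by (intro sum_mono window_weight_sq_le assms)
  also have "\<dots> = real (h n) * ((2 * D)\<^sup>2 / real (h n) ^ 4) + real (h n) * (D\<^sup>2 / real (h n) ^ 4)"
    by (subst sum_two_windows) (use assms in auto)
  also have "\<dots> = 5 * D\<^sup>2 / real (h n) ^ 3"
    using assms by (simp add: field_simps power_def)
  finally show ?thesis by (simp add: D_def)
qed

lemma window_error_eq_weighted_noise: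
  assumes "1 \<le> h n" "2 * h n \<le> n" "n \<le> pulls I i t \<omega>"
  shows "check_mu mu I eta i T h n \<omega> - tilde_mu mu i T h n
     = (\<Sum>\<tau>\<in>{1..t}. pull_weight I i (window_weight T h n) \<tau> \<omega> * eta \<tau> \<omega>)"
proof -
  have "check_mu mu I eta i T h n \<omega> - tilde_mu mu i T h n
      = (\<Sum>k\<in>{1..n}. window_weight T h n k * (Xobs mu I eta i k \<omega> - mu i k))"
    unfolding check_mu_def tilde_mu_def window_est_eq_sum_window_weight[where h = h and n = n, OF assms(1,2)]
    by (simp add: sum_subtractf right_diff_distrib)
  also have "\<dots> = (\<Sum>k\<in>{1..n}. window_weight T h n k * eta (pull_time I i k \<omega>) \<omega>)"
    using assms(3) by (intro sum.cong refl) (simp add: Xobs_eq_mean_plus_noise[where t = t])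
  also have "\<dots> = (\<Sum>k\<in>{1..pulls I i t \<omega>}. window_weight T h n k * eta (pull_time I i k \<omega>) \<omega>)"
    by (rule sum.mono_neutral_left) (use assms(3) window_weight_eq_0 in auto)
  finally show ?thesis by (simp only: sum_pull_weight_mult)
qed

lemma sum_pull_weight_window_sq_le:
  assumes "1 \<le> h n" "2 * h n \<le> n" "n < T"
  shows "(\<Sum>\<tau>\<in>{1..t}. (pull_weight I i (window_weight T h n) \<tau> \<omega>)\<^sup>2)
    \<le> 5 * (real T - real n + real (h n) - 1)\<^sup>2 / real (h n) ^ 3"
proof -
  have "(\<Sum>k\<in>{1..pulls I i t \<omega>}. (window_weight T h n k)\<^sup>2)
      = (\<Sum>k\<in>{1..pulls I i t \<omega>} \<inter> {1..n}. (window_weight T h n k)\<^sup>2)"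
    by (rule sum.mono_neutral_right) (auto simp: window_weight_eq_0)
  also have "\<dots> \<le> (\<Sum>k\<in>{1..n}. (window_weight T h n k)\<^sup>2)"
    by (rule sum_mono2) auto
  also have "\<dots> \<le> 5 * (real T - real n + real (h n) - 1)\<^sup>2 / real (h n) ^ 3"
    by (rule sum_window_weight_sq_le[where h = h and n = n, OF assms])
  finally show ?thesis by (simp only: sum_pull_weight_sq)
qed

lemma check_beta_sq:
  assumes "0 \<le> a"
  shows "(check_beta \<sigma> a T h n)\<^sup>2
    = 2 * \<sigma>\<^sup>2 * (5 * (real T - real n + real (h n) - 1)\<^sup>2 / real (h n) ^ 3) * (a / 10)"
  using assms by (simp add: check_beta_def power_mult_distrib)

lemma check_beta_nonneg:
  assumes "0 \<le> \<sigma>" "0 \<le> a" "n < T"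
  shows "0 \<le> check_beta \<sigma> a T h n"
  using assms by (simp add: check_beta_def)

lemma window_error_event_subset:
  assumes "\<And>n. 2 * h n \<le> n"
  shows "{\<omega> \<in> S. \<exists>t \<in> {1..T}. 1 \<le> h (pulls I i (t - 1) \<omega>) \<and>
            \<bar>check_mu mu I eta i T h (pulls I i (t - 1) \<omega>) \<omega> - tilde_mu mu i T h (pulls I i (t - 1) \<omega>)\<bar>
              > check_beta \<sigma> a T h (pulls I i (t - 1) \<omega>)}
    \<subseteq> (\<Union>n\<in>{n. n < T \<and> 1 \<le> h n}. {\<omega> \<in> S. check_beta \<sigma> a T h n
         < \<bar>\<Sum>\<tau>\<in>{1..T - 1}. pull_weight I i (window_weight T h n) \<tau> \<omega> * eta \<tau> \<omega>\<bar>})"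
proof clarify
  fix \<omega> t
  assume \<omega>: "\<omega> \<in> S" and t: "t \<in> {1..T}" and h1: "1 \<le> h (pulls I i (t - 1) \<omega>)"
    and err: "\<bar>check_mu mu I eta i T h (pulls I i (t - 1) \<omega>) \<omega> - tilde_mu mu i T h (pulls I i (t - 1) \<omega>)\<bar>
      > check_beta \<sigma> a T h (pulls I i (t - 1) \<omega>)"
  define n where "n = pulls I i (t - 1) \<omega>"
  have "n < T"
    using pulls_le[of I i "t - 1" \<omega>] t unfolding n_def atLeastAtMost_iff by arith
  moreover have "n \<le> pulls I i (T - 1) \<omega>"
    using t unfolding n_def by (intro pulls_mono diff_le_mono) simp
  then have "check_mu mu I eta i T h n \<omega> - tilde_mu mu i T h n
      = (\<Sum>\<tau>\<in>{1..T - 1}. pull_weight I i (window_weight T h n) \<tau> \<omega> * eta \<tau> \<omega>)"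
    using h1 assms unfolding n_def by (intro window_error_eq_weighted_noise)
  ultimately show "\<omega> \<in> (\<Union>n\<in>{n. n < T \<and> 1 \<le> h n}. {\<omega> \<in> S. check_beta \<sigma> a T h n
         < \<bar>\<Sum>\<tau>\<in>{1..T - 1}. pull_weight I i (window_weight T h n) \<tau> \<omega> * eta \<tau> \<omega>\<bar>})"
    using \<omega> h1 err by (intro UN_I[of n]) (simp_all add: n_def)
qed

locale subgaussian_noise = prob_space M for M :: "'w measure" +
  fixes F :: "nat \<Rightarrow> 'w measure" and eta :: "nat \<Rightarrow> 'w \<Rightarrow> real" and \<sigma> :: real
  assumes filt_sub: "\<And>t. sigma_finite_subalgebra M (F t)"
    and filt_mono: "\<And>t. subalgebra (F (Suc t)) (F t)"
    and eta_adapt: "\<And>t. 1 \<le> t \<Longrightarrow> eta t \<in> borel_measurable (F t)"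
    and eta_subgauss: "\<And>t \<xi>. 1 \<le> t \<Longrightarrow>
          AE \<omega> in M. nn_cond_exp M (F (t - 1)) (\<lambda>\<omega>. ennreal (exp (\<xi> * eta t \<omega>))) \<omega>
                       \<le> ennreal (exp (\<sigma>\<^sup>2 * \<xi>\<^sup>2 / 2))"
begin

lemma subalgebra_F: "subalgebra M (F t)"
  using filt_sub sigma_finite_subalgebra.subalg by blast

lemma measurable_F_M: "f \<in> measurable (F t) N \<Longrightarrow> f \<in> measurable M N"
  by (rule measurable_from_subalg[OF subalgebra_F])

lemma measurable_F_mono: "s \<le> t \<Longrightarrow> f \<in> measurable (F s) N \<Longrightarrow> f \<in> measurable (F t) N"
proof (induction t rule: dec_induct)
  case (step t)
  then show ?case using measurable_from_subalg[OF filt_mono[of t]] by blast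
qed

definition simple_predictable :: "(nat \<Rightarrow> 'w \<Rightarrow> real) \<Rightarrow> bool" where
  "simple_predictable w \<longleftrightarrow>
     (\<forall>\<tau>\<ge>1. w \<tau> \<in> borel_measurable (F (\<tau> - 1)) \<and> finite (w \<tau> ` space M))"

lemma simple_predictable_scale: "simple_predictable w \<Longrightarrow> simple_predictable (\<lambda>\<tau> \<omega>. l * w \<tau> \<omega>)"
  unfolding simple_predictable_def image_image[of "(*) l" "w _", symmetric, unfolded comp_def]
  by auto

lemma borel_measurable_F_later:
  assumes "simple_predictable w" "1 \<le> \<tau>" "\<tau> \<le> t"
  shows "w \<tau> \<in> borel_measurable (F t)" "eta \<tau> \<in> borel_measurable (F t)"
proof -
  have "w \<tau> \<in> borel_measurable (F (\<tau> - 1))"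
    using assms by (simp add: simple_predictable_def)
  then show "w \<tau> \<in> borel_measurable (F t)"
    by (rule measurable_F_mono[rotated]) (use assms in simp)
  show "eta \<tau> \<in> borel_measurable (F t)"
    by (rule measurable_F_mono[OF _ eta_adapt]) (use assms in simp_all)
qed

lemma borel_measurable_noise_sum_F:
  assumes "simple_predictable w"
  shows "(\<lambda>\<omega>. \<Sum>\<tau>\<in>{1..t}. w \<tau> \<omega> * eta \<tau> \<omega> - \<sigma>\<^sup>2 * (w \<tau> \<omega>)\<^sup>2 / 2) \<in> borel_measurable (F t)"
    and "(\<lambda>\<omega>. \<Sum>\<tau>\<in>{1..t}. w \<tau> \<omega> * eta \<tau> \<omega>) \<in> borel_measurable (F t)"
proof -
  {
    fix \<tau> assume "\<tau> \<in> {1..t}"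
    then have [measurable]: "w \<tau> \<in> borel_measurable (F t)" "eta \<tau> \<in> borel_measurable (F t)"
      using borel_measurable_F_later[OF assms] by auto
    have "(\<lambda>\<omega>. w \<tau> \<omega> * eta \<tau> \<omega> - \<sigma>\<^sup>2 * (w \<tau> \<omega>)\<^sup>2 / 2) \<in> borel_measurable (F t)"
      "(\<lambda>\<omega>. w \<tau> \<omega> * eta \<tau> \<omega>) \<in> borel_measurable (F t)"
      by measurable
  }
  then show "(\<lambda>\<omega>. \<Sum>\<tau>\<in>{1..t}. w \<tau> \<omega> * eta \<tau> \<omega> - \<sigma>\<^sup>2 * (w \<tau> \<omega>)\<^sup>2 / 2) \<in> borel_measurable (F t)"
    "(\<lambda>\<omega>. \<Sum>\<tau>\<in>{1..t}. w \<tau> \<omega> * eta \<tau> \<omega>) \<in> borel_measurable (F t)"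
    by (simp_all add: borel_measurable_sum)
qed

lemma nn_integral_mult_exp_noise_le:
  assumes s: "1 \<le> s" and Y: "Y \<in> borel_measurable (F (s - 1))"
  shows "(\<integral>\<^sup>+\<omega>. Y \<omega> * ennreal (exp (v * eta s \<omega>)) \<partial>M)
       \<le> (\<integral>\<^sup>+\<omega>. Y \<omega> * ennreal (exp (\<sigma>\<^sup>2 * v\<^sup>2 / 2)) \<partial>M)"
proof -
  interpret S: sigma_finite_subalgebra M "F (s - 1)" by (rule filt_sub)
  have g: "(\<lambda>\<omega>. ennreal (exp (v * eta s \<omega>))) \<in> borel_measurable M"
    using measurable_F_M[OF eta_adapt[OF s]] by measurable
  have "(\<integral>\<^sup>+\<omega>. Y \<omega> * ennreal (exp (v * eta s \<omega>)) \<partial>M)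
      = (\<integral>\<^sup>+\<omega>. Y \<omega> * nn_cond_exp M (F (s - 1)) (\<lambda>\<omega>. ennreal (exp (v * eta s \<omega>))) \<omega> \<partial>M)"
    by (rule S.nn_cond_exp_intg[OF Y g, symmetric])
  also have "\<dots> \<le> (\<integral>\<^sup>+\<omega>. Y \<omega> * ennreal (exp (\<sigma>\<^sup>2 * v\<^sup>2 / 2)) \<partial>M)"
    using eta_subgauss[OF s, of v]
    by (intro nn_integral_mono_AE) (auto elim!: eventually_mono intro: mult_left_mono)
  finally show ?thesis .
qed

text \<open>
  The subgaussian hypothesis only covers constant \<open>\<xi>\<close>; splitting over the finitely many values
  of \<open>\<zeta>\<close> reduces to that case.
\<close>
lemma nn_integral_mult_exp_weighted_noise_le:
  assumes s: "1 \<le> s" and Y: "Y \<in> borel_measurable (F (s - 1))"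
    and \<zeta>: "\<zeta> \<in> borel_measurable (F (s - 1))" and fin: "finite (\<zeta> ` space M)"
  shows "(\<integral>\<^sup>+\<omega>. Y \<omega> * ennreal (exp (\<zeta> \<omega> * eta s \<omega>)) \<partial>M)
       \<le> (\<integral>\<^sup>+\<omega>. Y \<omega> * ennreal (exp (\<sigma>\<^sup>2 * (\<zeta> \<omega>)\<^sup>2 / 2)) \<partial>M)"
proof -
  define Y' where "Y' v \<omega> = (if \<zeta> \<omega> = v then Y \<omega> else 0)" for v \<omega>
  have Y'_F [measurable]: "Y' v \<in> borel_measurable (F (s - 1))" for v
    using Y \<zeta> unfolding Y'_def by measurable
  note Y'_M [measurable] = measurable_F_M[OF Y'_F]
  note eta_M [measurable] = measurable_F_M[OF eta_adapt[OF s]]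
  have split: "Y \<omega> * g (\<zeta> \<omega>) = (\<Sum>v\<in>\<zeta> ` space M. Y' v \<omega> * g v)" if "\<omega> \<in> space M" for \<omega> g
  proof -
    have "(\<Sum>v\<in>\<zeta> ` space M. Y' v \<omega> * g v) = (\<Sum>v\<in>\<zeta> ` space M. if \<zeta> \<omega> = v then Y \<omega> * g v else 0)"
      by (rule sum.cong) (auto simp: Y'_def)
    then show ?thesis using fin that by (simp add: sum.delta')
  qed
  have "(\<integral>\<^sup>+\<omega>. Y \<omega> * ennreal (exp (\<zeta> \<omega> * eta s \<omega>)) \<partial>M)
      = (\<integral>\<^sup>+\<omega>. (\<Sum>v\<in>\<zeta> ` space M. Y' v \<omega> * ennreal (exp (v * eta s \<omega>))) \<partial>M)"
    by (intro nn_integral_cong split)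
  also have "\<dots> = (\<Sum>v\<in>\<zeta> ` space M. \<integral>\<^sup>+\<omega>. Y' v \<omega> * ennreal (exp (v * eta s \<omega>)) \<partial>M)"
    by (rule nn_integral_sum) measurable
  also have "\<dots> \<le> (\<Sum>v\<in>\<zeta> ` space M. \<integral>\<^sup>+\<omega>. Y' v \<omega> * ennreal (exp (\<sigma>\<^sup>2 * v\<^sup>2 / 2)) \<partial>M)"
    by (intro sum_mono nn_integral_mult_exp_noise_le[OF s Y'_F])
  also have "\<dots> = (\<integral>\<^sup>+\<omega>. (\<Sum>v\<in>\<zeta> ` space M. Y' v \<omega> * ennreal (exp (\<sigma>\<^sup>2 * v\<^sup>2 / 2))) \<partial>M)"
    by (rule nn_integral_sum[symmetric]) measurable
  also have "\<dots> = (\<integral>\<^sup>+\<omega>. Y \<omega> * ennreal (exp (\<sigma>\<^sup>2 * (\<zeta> \<omega>)\<^sup>2 / 2)) \<partial>M)"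
    by (intro nn_integral_cong split[symmetric])
  finally show ?thesis .
qed

lemma nn_integral_exp_noise_sum_le_1:
  assumes w: "simple_predictable w"
  shows "(\<integral>\<^sup>+\<omega>. ennreal (exp (\<Sum>\<tau>\<in>{1..t}. w \<tau> \<omega> * eta \<tau> \<omega> - \<sigma>\<^sup>2 * (w \<tau> \<omega>)\<^sup>2 / 2)) \<partial>M) \<le> 1"
proof (induction t)
  case 0
  show ?case by (simp add: emeasure_space_1)
next
  case (Suc t)
  define G where "G \<omega> = ennreal (exp (\<Sum>\<tau>\<in>{1..t}. w \<tau> \<omega> * eta \<tau> \<omega> - \<sigma>\<^sup>2 * (w \<tau> \<omega>)\<^sup>2 / 2))" for \<omega>
  define \<zeta> where "\<zeta> = w (Suc t)"
  define Y where "Y \<omega> = G \<omega> * ennreal (exp (- (\<sigma>\<^sup>2 * (\<zeta> \<omega>)\<^sup>2 / 2)))" for \<omega>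
  have \<zeta>: "\<zeta> \<in> borel_measurable (F (Suc t - 1))" "finite (\<zeta> ` space M)"
    using w by (auto simp: simple_predictable_def \<zeta>_def)
  have "Y \<in> borel_measurable (F (Suc t - 1))"
    using borel_measurable_noise_sum_F(1)[OF w, of t] \<zeta>(1) unfolding Y_def G_def by simp measurable
  then have "(\<integral>\<^sup>+\<omega>. Y \<omega> * ennreal (exp (\<zeta> \<omega> * eta (Suc t) \<omega>)) \<partial>M)
      \<le> (\<integral>\<^sup>+\<omega>. Y \<omega> * ennreal (exp (\<sigma>\<^sup>2 * (\<zeta> \<omega>)\<^sup>2 / 2)) \<partial>M)"
    by (intro nn_integral_mult_exp_weighted_noise_le \<zeta>) simp
  moreover have "Y \<omega> * ennreal (exp (\<zeta> \<omega> * eta (Suc t) \<omega>))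
      = ennreal (exp (\<Sum>\<tau>\<in>{1..Suc t}. w \<tau> \<omega> * eta \<tau> \<omega> - \<sigma>\<^sup>2 * (w \<tau> \<omega>)\<^sup>2 / 2))" for \<omega>
  proof -
    have "exp (\<Sum>\<tau>\<in>{1..Suc t}. w \<tau> \<omega> * eta \<tau> \<omega> - \<sigma>\<^sup>2 * (w \<tau> \<omega>)\<^sup>2 / 2)
        = exp (\<Sum>\<tau>\<in>{1..t}. w \<tau> \<omega> * eta \<tau> \<omega> - \<sigma>\<^sup>2 * (w \<tau> \<omega>)\<^sup>2 / 2)
          * exp (- (\<sigma>\<^sup>2 * (\<zeta> \<omega>)\<^sup>2 / 2)) * exp (\<zeta> \<omega> * eta (Suc t) \<omega>)"
      by (simp add: \<zeta>_def algebra_simps flip: exp_add)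
    then show ?thesis by (simp add: Y_def G_def ennreal_mult)
  qed
  moreover have "Y \<omega> * ennreal (exp (\<sigma>\<^sup>2 * (\<zeta> \<omega>)\<^sup>2 / 2)) = G \<omega>" for \<omega>
    by (simp add: Y_def mult.assoc ennreal_mult[symmetric] mult_exp_exp del: ennreal_mult)
  ultimately show ?case using Suc by (simp add: G_def)
qed

lemma emeasure_noise_sum_gt_le:
  assumes w: "simple_predictable w" and l: "0 \<le> l"
    and V: "\<And>\<omega>. \<omega> \<in> space M \<Longrightarrow> (\<Sum>\<tau>\<in>{1..t}. (w \<tau> \<omega>)\<^sup>2) \<le> C"
  shows "emeasure M {\<omega>\<in>space M. \<beta> < (\<Sum>\<tau>\<in>{1..t}. w \<tau> \<omega> * eta \<tau> \<omega>)}
    \<le> ennreal (exp (- (l * \<beta>) + l\<^sup>2 * \<sigma>\<^sup>2 * C / 2))"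
proof -
  let ?S = "{\<omega>\<in>space M. \<beta> < (\<Sum>\<tau>\<in>{1..t}. w \<tau> \<omega> * eta \<tau> \<omega>)}"
  let ?G = "\<lambda>\<omega>. ennreal (exp (\<Sum>\<tau>\<in>{1..t}. l * w \<tau> \<omega> * eta \<tau> \<omega> - \<sigma>\<^sup>2 * (l * w \<tau> \<omega>)\<^sup>2 / 2))"
  let ?K = "ennreal (exp (- (l * \<beta>) + l\<^sup>2 * \<sigma>\<^sup>2 * C / 2))"
  have G_M: "?G \<in> borel_measurable M"
    using measurable_F_M[OF borel_measurable_noise_sum_F(1)[OF simple_predictable_scale[OF w]]]
    by measurable
  have S: "?S \<in> sets M"
    using measurable_F_M[OF borel_measurable_noise_sum_F(2)[OF w]] by measurable
  have "indicator ?S \<omega> \<le> ?G \<omega> * ?K" if "\<omega> \<in> space M" for \<omega>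
  proof (cases "\<omega> \<in> ?S")
    case True
    have "(\<Sum>\<tau>\<in>{1..t}. l * w \<tau> \<omega> * eta \<tau> \<omega> - \<sigma>\<^sup>2 * (l * w \<tau> \<omega>)\<^sup>2 / 2)
        = l * (\<Sum>\<tau>\<in>{1..t}. w \<tau> \<omega> * eta \<tau> \<omega>) - l\<^sup>2 * \<sigma>\<^sup>2 * (\<Sum>\<tau>\<in>{1..t}. (w \<tau> \<omega>)\<^sup>2) / 2"
      by (simp add: sum_subtractf sum_distrib_left sum_divide_distrib power_mult_distrib algebra_simps)
    moreover have "l * \<beta> \<le> l * (\<Sum>\<tau>\<in>{1..t}. w \<tau> \<omega> * eta \<tau> \<omega>)"
      using True l by (simp add: mult_left_mono)
    moreover have "l\<^sup>2 * \<sigma>\<^sup>2 * (\<Sum>\<tau>\<in>{1..t}. (w \<tau> \<omega>)\<^sup>2) \<le> l\<^sup>2 * \<sigma>\<^sup>2 * C"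
      using V[OF that] by (simp add: mult_left_mono)
    ultimately have "1 \<le> exp (\<Sum>\<tau>\<in>{1..t}. l * w \<tau> \<omega> * eta \<tau> \<omega> - \<sigma>\<^sup>2 * (l * w \<tau> \<omega>)\<^sup>2 / 2)
        * exp (- (l * \<beta>) + l\<^sup>2 * \<sigma>\<^sup>2 * C / 2)"
      by (simp flip: exp_add)
    then have "ennreal 1 \<le> ennreal (exp (\<Sum>\<tau>\<in>{1..t}. l * w \<tau> \<omega> * eta \<tau> \<omega> - \<sigma>\<^sup>2 * (l * w \<tau> \<omega>)\<^sup>2 / 2)
        * exp (- (l * \<beta>) + l\<^sup>2 * \<sigma>\<^sup>2 * C / 2))"
      by (rule ennreal_leI)
    then show ?thesis using True by (simp add: ennreal_mult)
  qed simp
  then have "emeasure M ?S \<le> (\<integral>\<^sup>+\<omega>. ?G \<omega> * ?K \<partial>M)"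
    using S by (simp flip: nn_integral_indicator add: nn_integral_mono)
  also have "\<dots> = (\<integral>\<^sup>+\<omega>. ?G \<omega> \<partial>M) * ?K"
    using G_M by (rule nn_integral_multc)
  also have "\<dots> \<le> 1 * ?K"
    by (rule mult_right_mono[OF nn_integral_exp_noise_sum_le_1[OF simple_predictable_scale[OF w]]]) simp
  finally show ?thesis by simp
qed

lemma emeasure_noise_sum_gt_eq_0:
  assumes "\<sigma> = 0" and w: "simple_predictable w"
    and V: "\<And>\<omega>. \<omega> \<in> space M \<Longrightarrow> (\<Sum>\<tau>\<in>{1..t}. (w \<tau> \<omega>)\<^sup>2) \<le> C" and \<delta>: "0 < \<delta>"
  shows "emeasure M {\<omega>\<in>space M. \<delta> < (\<Sum>\<tau>\<in>{1..t}. w \<tau> \<omega> * eta \<tau> \<omega>)} = 0"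
proof -
  have "emeasure M {\<omega>\<in>space M. \<delta> < (\<Sum>\<tau>\<in>{1..t}. w \<tau> \<omega> * eta \<tau> \<omega>)} \<le> 0 + ennreal e"
    if e: "0 < e" for e
  proof -
    have "exp (- max 0 (- ln e)) \<le> exp (ln e)"
      by simp
    then have "ennreal (exp (- max 0 (- ln e))) \<le> ennreal e"
      using e by (intro ennreal_leI) simp
    moreover have "emeasure M {\<omega>\<in>space M. \<delta> < (\<Sum>\<tau>\<in>{1..t}. w \<tau> \<omega> * eta \<tau> \<omega>)}
        \<le> ennreal (exp (- max 0 (- ln e)))"
      using emeasure_noise_sum_gt_le[OF w _ V, where l = "max 0 (- ln e) / \<delta>" and \<beta> = \<delta>] \<delta> assms(1)
      by simp
    ultimately show ?thesis by simp
  qed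
  then have "emeasure M {\<omega>\<in>space M. \<delta> < (\<Sum>\<tau>\<in>{1..t}. w \<tau> \<omega> * eta \<tau> \<omega>)} \<le> 0"
    by (rule ennreal_le_epsilon)
  then show ?thesis by simp
qed

text \<open>
  For \<open>\<sigma> = 0\<close> the Chernoff bound is useless at the threshold 0, which is reached as a limit.
\<close>
lemma emeasure_noise_sum_pos_eq_0:
  assumes "\<sigma> = 0" and w: "simple_predictable w"
    and V: "\<And>\<omega>. \<omega> \<in> space M \<Longrightarrow> (\<Sum>\<tau>\<in>{1..t}. (w \<tau> \<omega>)\<^sup>2) \<le> C"
  shows "emeasure M {\<omega>\<in>space M. 0 < (\<Sum>\<tau>\<in>{1..t}. w \<tau> \<omega> * eta \<tau> \<omega>)} = 0"
proof -
  let ?D = "\<lambda>\<omega>. \<Sum>\<tau>\<in>{1..t}. w \<tau> \<omega> * eta \<tau> \<omega>"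
  have D_M [measurable]: "?D \<in> borel_measurable M"
    using measurable_F_M[OF borel_measurable_noise_sum_F(2)[OF w]] .
  have "{\<omega>\<in>space M. 0 < ?D \<omega>} = (\<Union>m. {\<omega>\<in>space M. inverse (real (Suc m)) < ?D \<omega>})"
  proof safe
    fix \<omega> assume "\<omega> \<in> space M" "0 < ?D \<omega>"
    then obtain m where "inverse (real (Suc m)) < ?D \<omega>"
      using reals_Archimedean by blast
    then show "\<omega> \<in> (\<Union>m. {\<omega>\<in>space M. inverse (real (Suc m)) < ?D \<omega>})"
      using \<open>\<omega> \<in> space M\<close> by blast
  next
    fix \<omega> m assume "inverse (real (Suc m)) < ?D \<omega>"
    moreover have "0 < inverse (real (Suc m))" by simp
    ultimately show "0 < ?D \<omega>" by linarith
  qed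
  moreover have "emeasure M (\<Union>m. {\<omega>\<in>space M. inverse (real (Suc m)) < ?D \<omega>}) = 0"
  proof (rule emeasure_UN_eq_0)
    show "emeasure M {\<omega>\<in>space M. inverse (real (Suc m)) < ?D \<omega>} = 0" for m
      using emeasure_noise_sum_gt_eq_0[OF assms, of "inverse (real (Suc m))"] by simp
    show "range (\<lambda>m. {\<omega>\<in>space M. inverse (real (Suc m)) < ?D \<omega>}) \<subseteq> sets M"
      by (intro image_subsetI) measurable
  qed
  ultimately show ?thesis by simp
qed

lemma measure_noise_sum_gt_le:
  assumes w: "simple_predictable w"
    and V: "\<And>\<omega>. \<omega> \<in> space M \<Longrightarrow> (\<Sum>\<tau>\<in>{1..t}. (w \<tau> \<omega>)\<^sup>2) \<le> C"
    and C: "0 < C" and \<beta>: "0 \<le> \<beta>" and r: "\<beta>\<^sup>2 = 2 * \<sigma>\<^sup>2 * C * r"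
  shows "measure M {\<omega>\<in>space M. \<beta> < (\<Sum>\<tau>\<in>{1..t}. w \<tau> \<omega> * eta \<tau> \<omega>)} \<le> exp (- r)"
proof (cases "\<sigma> = 0")
  case True
  then have "\<beta> = 0" using r by simp
  then show ?thesis
    using emeasure_noise_sum_pos_eq_0[OF True w V] by (simp add: emeasure_eq_measure)
next
  case False
  define l where "l = \<beta> / (\<sigma>\<^sup>2 * C)"
  have "- (l * \<beta>) + l\<^sup>2 * \<sigma>\<^sup>2 * C / 2 = - r"
    using False C r by (simp add: l_def field_simps power2_eq_square)
  moreover have "0 \<le> l" using \<beta> C by (simp add: l_def)
  ultimately show ?thesis
    using emeasure_noise_sum_gt_le[OF w _ V, of l \<beta>] by (simp add: emeasure_eq_measure)
qed

lemma measure_abs_noise_sum_gt_le: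
  assumes w: "simple_predictable w"
    and V: "\<And>\<omega>. \<omega> \<in> space M \<Longrightarrow> (\<Sum>\<tau>\<in>{1..t}. (w \<tau> \<omega>)\<^sup>2) \<le> C"
    and C: "0 < C" and \<beta>: "0 \<le> \<beta>" and r: "\<beta>\<^sup>2 = 2 * \<sigma>\<^sup>2 * C * r"
  shows "measure M {\<omega>\<in>space M. \<beta> < \<bar>\<Sum>\<tau>\<in>{1..t}. w \<tau> \<omega> * eta \<tau> \<omega>\<bar>} \<le> 2 * exp (- r)"
proof -
  let ?w' = "\<lambda>\<tau> \<omega>. - 1 * w \<tau> \<omega>"
  let ?A = "{\<omega>\<in>space M. \<beta> < (\<Sum>\<tau>\<in>{1..t}. w \<tau> \<omega> * eta \<tau> \<omega>)}"
  let ?B = "{\<omega>\<in>space M. \<beta> < (\<Sum>\<tau>\<in>{1..t}. ?w' \<tau> \<omega> * eta \<tau> \<omega>)}"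
  have w': "simple_predictable ?w'" by (rule simple_predictable_scale[OF w])
  have "?A \<in> sets M" "?B \<in> sets M"
    using measurable_F_M[OF borel_measurable_noise_sum_F(2)[OF w]]
      measurable_F_M[OF borel_measurable_noise_sum_F(2)[OF w']] by measurable
  moreover have "{\<omega>\<in>space M. \<beta> < \<bar>\<Sum>\<tau>\<in>{1..t}. w \<tau> \<omega> * eta \<tau> \<omega>\<bar>} = ?A \<union> ?B"
    by (auto simp: sum_negf abs_real_def)
  ultimately have "measure M {\<omega>\<in>space M. \<beta> < \<bar>\<Sum>\<tau>\<in>{1..t}. w \<tau> \<omega> * eta \<tau> \<omega>\<bar>}
      \<le> measure M ?A + measure M ?B"
    by (simp add: measure_Un_le)
  also have "\<dots> \<le> exp (- r) + exp (- r)"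
    using measure_noise_sum_gt_le[OF w V C \<beta> r] measure_noise_sum_gt_le[OF w' _ C \<beta> r] V
    by (intro add_mono) auto
  finally show ?thesis by simp
qed

end

locale rested_bandit = subgaussian_noise M F eta \<sigma>
  for M :: "'w measure" and F eta \<sigma> +
  fixes I :: "nat \<Rightarrow> 'w \<Rightarrow> nat"
  assumes I_pred: "\<And>t. 1 \<le> t \<Longrightarrow> I t \<in> measurable (F (t - 1)) (count_space UNIV)"
begin

lemma pulls_measurable: "\<tau> \<le> Suc t \<Longrightarrow> (\<lambda>\<omega>. pulls I i \<tau> \<omega>) \<in> measurable (F t) (count_space UNIV)"
proof (induction \<tau>)
  case (Suc \<tau>)
  have [measurable]: "I (Suc \<tau>) \<in> measurable (F t) (count_space UNIV)"
    using measurable_F_mono[OF _ I_pred, of "Suc \<tau>" t] Suc.prems by simp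
  have [measurable]: "(\<lambda>\<omega>. pulls I i \<tau> \<omega>) \<in> measurable (F t) (count_space UNIV)"
    using Suc by simp
  show ?case by (simp add: pulls_Suc)
next
  case 0
  have "pulls I i 0 = (\<lambda>_. 0)" by auto
  then show ?case by simp
qed

lemma simple_predictable_pull_weight: "simple_predictable (pull_weight I i c)"
  unfolding simple_predictable_def
proof (intro allI impI conjI finite_range_pull_weight)
  fix \<tau> :: nat assume "1 \<le> \<tau>"
  then have [measurable]: "I \<tau> \<in> measurable (F (\<tau> - 1)) (count_space UNIV)"
    "(\<lambda>\<omega>. pulls I i \<tau> \<omega>) \<in> measurable (F (\<tau> - 1)) (count_space UNIV)"
    using I_pred pulls_measurable by auto
  show "pull_weight I i c \<tau> \<in> borel_measurable (F (\<tau> - 1))"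
    unfolding pull_weight_def[abs_def] by measurable
qed

lemma measure_window_noise_gt_check_beta_le:
  assumes "1 \<le> h n" "2 * h n \<le> n" "n < T" "0 \<le> \<sigma>" "0 \<le> a"
  shows "measure M {\<omega>\<in>space M. check_beta \<sigma> a T h n
      < \<bar>\<Sum>\<tau>\<in>{1..t}. pull_weight I i (window_weight T h n) \<tau> \<omega> * eta \<tau> \<omega>\<bar>} \<le> 2 * exp (- (a / 10))"
proof (rule measure_abs_noise_sum_gt_le)
  show "simple_predictable (pull_weight I i (window_weight T h n))"
    by (rule simple_predictable_pull_weight)
  show "\<And>\<omega>. \<omega> \<in> space M \<Longrightarrow> (\<Sum>\<tau>\<in>{1..t}. (pull_weight I i (window_weight T h n) \<tau> \<omega>)\<^sup>2)
      \<le> 5 * (real T - real n + real (h n) - 1)\<^sup>2 / real (h n) ^ 3"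
    by (rule sum_pull_weight_window_sq_le[where h = h and n = n, OF assms(1-3)])
  show "0 < 5 * (real T - real n + real (h n) - 1)\<^sup>2 / real (h n) ^ 3"
    using assms by simp
  show "0 \<le> check_beta \<sigma> a T h n"
    by (rule check_beta_nonneg[OF assms(4,5,3)])
  show "(check_beta \<sigma> a T h n)\<^sup>2
      = 2 * \<sigma>\<^sup>2 * (5 * (real T - real n + real (h n) - 1)\<^sup>2 / real (h n) ^ 3) * (a / 10)"
    by (rule check_beta_sq[OF assms(5)])
qed

lemma measure_window_error_gt_check_beta_le:
  assumes h_le: "\<And>n. h n \<le> n div 2" and "0 \<le> \<sigma>" "0 \<le> a"
  shows "measure M {\<omega> \<in> space M. \<exists>t \<in> {1..T}. 1 \<le> h (pulls I i (t - 1) \<omega>) \<and>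
            \<bar>check_mu mu I eta i T h (pulls I i (t - 1) \<omega>) \<omega> - tilde_mu mu i T h (pulls I i (t - 1) \<omega>)\<bar>
              > check_beta \<sigma> a T h (pulls I i (t - 1) \<omega>)}
         \<le> 2 * real T * exp (- a / 10)"
proof -
  have h2: "2 * h n \<le> n" for n using h_le[of n] by simp
  define N where "N = {n. n < T \<and> 1 \<le> h n}"
  define E where "E n = {\<omega> \<in> space M. check_beta \<sigma> a T h n
    < \<bar>\<Sum>\<tau>\<in>{1..T - 1}. pull_weight I i (window_weight T h n) \<tau> \<omega> * eta \<tau> \<omega>\<bar>}" for n
  have E: "E n \<in> sets M" for n
    using measurable_F_M[OF borel_measurable_noise_sum_F(2)[OF simple_predictable_pull_weight]]
    unfolding E_def by measurable
  have "finite N" "card N \<le> T"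
    using card_mono[of "{..<T}" N] by (auto simp: N_def)
  have "measure M {\<omega> \<in> space M. \<exists>t \<in> {1..T}. 1 \<le> h (pulls I i (t - 1) \<omega>) \<and>
            \<bar>check_mu mu I eta i T h (pulls I i (t - 1) \<omega>) \<omega> - tilde_mu mu i T h (pulls I i (t - 1) \<omega>)\<bar>
              > check_beta \<sigma> a T h (pulls I i (t - 1) \<omega>)} \<le> measure M (\<Union>n\<in>N. E n)"
  proof (rule finite_measure_mono)
    show "(\<Union>n\<in>N. E n) \<in> sets M" using \<open>finite N\<close> E by auto
  qed (unfold N_def E_def, rule window_error_event_subset[OF h2])
  also have "\<dots> \<le> (\<Sum>n\<in>N. measure M (E n))"
    using \<open>finite N\<close> E by (intro finite_measure_subadditive_finite) auto
  also have "\<dots> \<le> real (card N) * (2 * exp (- (a / 10)))"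
    unfolding E_def N_def using assms h2
    by (intro sum_bounded_above measure_window_noise_gt_check_beta_le[where h = h]) auto
  also have "\<dots> \<le> 2 * real T * exp (- a / 10)"
    using \<open>card N \<le> T\<close> by simp
  finally show ?thesis .
qed

end

theorem lemma6:
  fixes M :: "'w measure" and F :: "nat \<Rightarrow> 'w measure"
    and I :: "nat \<Rightarrow> 'w \<Rightarrow> nat" and eta :: "nat \<Rightarrow> 'w \<Rightarrow> real"
    and mu :: "nat \<Rightarrow> nat \<Rightarrow> real" and K i T :: nat and h :: "nat \<Rightarrow> nat"
    and \<sigma> a :: real
  assumes prob: "prob_space M"
    and filt_sub: "\<And>t. sigma_finite_subalgebra M (F t)"
    and filt_mono: "\<And>t. subalgebra (F (Suc t)) (F t)"
    and arms: "\<And>t \<omega>. 1 \<le> t \<Longrightarrow> \<omega> \<in> space M \<Longrightarrow> I t \<omega> < K"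
    and I_pred: "\<And>t. 1 \<le> t \<Longrightarrow> I t \<in> measurable (F (t - 1)) (count_space UNIV)"
    and eta_adapt: "\<And>t. 1 \<le> t \<Longrightarrow> eta t \<in> borel_measurable (F t)"
    and eta_int: "\<And>t. 1 \<le> t \<Longrightarrow> integrable M (eta t)"
    and eta_zero_mean: "\<And>t. 1 \<le> t \<Longrightarrow>
          AE \<omega> in M. real_cond_exp M (F (t - 1)) (eta t) \<omega> = 0"
    and eta_subgauss: "\<And>t \<xi>. 1 \<le> t \<Longrightarrow>
          AE \<omega> in M. nn_cond_exp M (F (t - 1)) (\<lambda>\<omega>. ennreal (exp (\<xi> * eta t \<omega>))) \<omega>
                       \<le> ennreal (exp (\<sigma>\<^sup>2 * \<xi>\<^sup>2 / 2))"
    and sigma_nonneg: "0 \<le> \<sigma>"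
    and arm: "i < K"
    and h_le: "\<And>n. h n \<le> n div 2"
    and a_pos: "0 < a"
  shows "measure M {\<omega> \<in> space M. \<exists>t \<in> {1..T}.
            1 \<le> h (pulls I i (t - 1) \<omega>) \<and>
            \<bar>check_mu mu I eta i T h (pulls I i (t - 1) \<omega>) \<omega>
               - tilde_mu mu i T h (pulls I i (t - 1) \<omega>)\<bar>
              > check_beta \<sigma> a T h (pulls I i (t - 1) \<omega>)}
         \<le> 2 * real T * exp (- a / 10)"
proof -
  interpret rested_bandit M F eta \<sigma> I
    by (intro rested_bandit.intro subgaussian_noise.intro subgaussian_noise_axioms.intro
        rested_bandit_axioms.intro prob filt_sub filt_mono eta_adapt eta_subgauss I_pred)
  show ?thesis
    using a_pos by (intro measure_window_error_gt_check_beta_le h_le sigma_nonneg) simp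
qed

end
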